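(* Let $\mathbf{L}'=(L;\vee,\wedge,{}',0,1)$ be an ortholattice with lattice reduct $\mathbf{L}$ and dual $\mathcal{D}(\mathbf{L}')=(P_{\mathbf{L}},E,\mathscr{T}_{\mathbf{L}},g)$. For $a\in L$ let $e_a$ be the partial map on $P_{\mathbf{L}}$ with $e_a(f)=f(a)$ if $a\in\mathrm{dom}f$ and undefined otherwise. Then $a\mapsto e_a$ is an ortholattice isomorphism from $\mathbf{L}'$ onto $\mathcal{E}(\mathcal{D}(\mathbf{L}'))=(\mathrm{MPM}(\mathcal{D}(\mathbf{L}')),\wedge,\vee,\varphi_0,\varphi_1,\neg)$; in particular $e_{a'}=\neg e_a$ for all $a\in L$, and $\mathbf{L}'\cong\mathcal{E}(\mathcal{D}(\mathbf{L}'))$.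
   Context: An ortholattice is a bounded lattice with an operation $'$ satisfying $a''=a$, $a\wedge a'=0$, $a\vee a'=1$ and the De Morgan laws. A partial homomorphism $\mathbf{L}\to\mathbf{2}$ is a partial map $f:L\to\{0,1\}$ whose domain is a $(0,1)$-sublattice and whose restriction is a $(0,1)$-homomorphism; an MPH is one with no proper extension; $P_{\mathbf{L}}$ is the set of MPHs. $(f,h)\in E$ iff $f(a)\le h(a)$ for all $a\in\mathrm{dom}f\cap\mathrm{dom}h$. $\mathscr{T}_{\mathbf{L}}$ has subbasis of closed sets $V_a=\{f: f(a)=0\}$, $W_a=\{f: f(a)=1\}$. $g(f)(a)=0$ if $f(a')=1$, $g(f)(a)=1$ if $f(a')=0$, undefined otherwise. A partial morphism from $(X,E,\mathscr{T})$ to $\underset{\sim}{2}_{\mathscr{T}}$ ($\{0,1\}$ with $\le$ and discrete topology) is a partial map $\varphi:X\to\{0,1\}$ with closed domain, with $\varphi(x)\le\varphi(y)$ whenever $x,y\in\mathrm{dom}\varphi$, $(x,y)\in E$, continuous on its domain; an MPM is one with no proper extension; $\mathrm{MPM}(\cdot)$ denotes the set of MPMs, ordered by $\varphi\le\psi$ iff $\varphi^{-1}(1)\subseteq\psi^{-1}(1)$, which makes it a bounded lattice with meet $\wedge$, join $\vee$, bounds $\varphi_0,\varphi_1$. For an MPM $\varphi$ of $(X,E,\mathscr{T},g)$, $\neg\varphi$ is the partial map with $(\neg\varphi)(x)=1$ if $\varphi(g(x))=0$, $(\neg\varphi)(x)=0$ if $\varphi(g(x))=1$, undefined otherwise. 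*)

theory Defs
  imports "HOL-Analysis.Analysis" "HOL-Library.Complemented_Lattices"
begin

text \<open>Ortholattices are instances of the class orthocomplemented_lattice
  (bounded lattice, x inf -x = bot, x sup -x = top, - - x = x, antitone -).
  The two-element lattice 2 is bool (False = 0, True = 1).\<close>

definition partial_hom :: "('a::bounded_lattice \<Rightarrow> bool option) \<Rightarrow> bool" where
  "partial_hom f \<longleftrightarrow>
     bot \<in> dom f \<and> top \<in> dom f \<and>
     (\<forall>x\<in>dom f. \<forall>y\<in>dom f. inf x y \<in> dom f \<and> sup x y \<in> dom f) \<and>
     f bot = Some False \<and> f top = Some True \<and>
     (\<forall>x\<in>dom f. \<forall>y\<in>dom f.
        the (f (inf x y)) = (the (f x) \<and> the (f y)) \<and>
        the (f (sup x y)) = (the (f x) \<or> the (f y)))"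

definition MPH :: "('a::bounded_lattice \<Rightarrow> bool option) \<Rightarrow> bool" where
  "MPH f \<longleftrightarrow> partial_hom f \<and> (\<forall>h. partial_hom h \<and> f \<subseteq>\<^sub>m h \<longrightarrow> h = f)"

definition PL :: "('a::bounded_lattice \<Rightarrow> bool option) set" where
  "PL = {f. MPH f}"

definition EL :: "('a::bounded_lattice \<Rightarrow> bool option) \<Rightarrow> ('a \<Rightarrow> bool option) \<Rightarrow> bool" where
  "EL f h \<longleftrightarrow> (\<forall>a \<in> dom f \<inter> dom h. the (f a) \<le> the (h a))"

definition V_set :: "'a::bounded_lattice \<Rightarrow> ('a \<Rightarrow> bool option) set" where
  "V_set a = {f \<in> PL. f a = Some False}"

definition W_set :: "'a::bounded_lattice \<Rightarrow> ('a \<Rightarrow> bool option) set" where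
  "W_set a = {f \<in> PL. f a = Some True}"

text \<open>The topology T_L on P_L: the sets V_a, W_a form a subbasis of closed sets,
  i.e. their complements (in P_L) form a subbasis of open sets.\<close>
definition TL :: "('a::bounded_lattice \<Rightarrow> bool option) topology" where
  "TL = topology_generated_by
          ({PL} \<union> {PL - V_set a | a. True} \<union> {PL - W_set a | a. True})"

definition gL :: "('a::orthocomplemented_lattice \<Rightarrow> bool option) \<Rightarrow> ('a \<Rightarrow> bool option)" where
  "gL f = (\<lambda>a. if f (- a) = Some True then Some False
               else if f (- a) = Some False then Some True else None)"

definition partial_morphism :: "(('a::bounded_lattice \<Rightarrow> bool option) \<Rightarrow> bool option) \<Rightarrow> bool" where
  "partial_morphism \<phi> \<longleftrightarrow>
     dom \<phi> \<subseteq> PL \<and>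
     closedin TL (dom \<phi>) \<and>
     (\<forall>x\<in>dom \<phi>. \<forall>y\<in>dom \<phi>. EL x y \<longrightarrow> the (\<phi> x) \<le> the (\<phi> y)) \<and>
     continuous_map (subtopology TL (dom \<phi>)) (discrete_topology UNIV) (\<lambda>x. the (\<phi> x))"

definition MPM :: "(('a::bounded_lattice \<Rightarrow> bool option) \<Rightarrow> bool option) set" where
  "MPM = {\<phi>. partial_morphism \<phi> \<and>
              (\<forall>\<psi>. partial_morphism \<psi> \<and> \<phi> \<subseteq>\<^sub>m \<psi> \<longrightarrow> \<psi> = \<phi>)}"

definition mpm_le :: "(('a \<Rightarrow> bool option) \<Rightarrow> bool option) \<Rightarrow> (('a \<Rightarrow> bool option) \<Rightarrow> bool option) \<Rightarrow> bool" where
  "mpm_le \<phi> \<psi> \<longleftrightarrow> \<phi> -` {Some True} \<subseteq> \<psi> -` {Some True}"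

definition mpm_neg :: "(('a::orthocomplemented_lattice \<Rightarrow> bool option) \<Rightarrow> bool option)
                       \<Rightarrow> (('a \<Rightarrow> bool option) \<Rightarrow> bool option)" where
  "mpm_neg \<phi> = (\<lambda>x. if x \<in> PL then
                      (if \<phi> (gL x) = Some False then Some True
                       else if \<phi> (gL x) = Some True then Some False else None)
                    else None)"

definition eval_map :: "'a::bounded_lattice \<Rightarrow> (('a \<Rightarrow> bool option) \<Rightarrow> bool option)" where
  "eval_map a = (\<lambda>f. if f \<in> PL then f a else None)"

end

theory Submission
  imports Defs
begin

(* Every disjoint pair of a filter and an ideal of L is separated by an MPH (Zorn's lemma on
   partial homomorphisms), and conversely the true and false sets of an MPH are a filter and an
   ideal. Applied to the elements forced true, resp. false, by finitely many constraints f(a) = b,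
   this shows that finitely satisfiable sets of constraints are satisfiable by MPHs, so the dual
   space is compact by Alexander's subbase theorem.
   Each e_a is an MPM, and a <= b iff e_a <= e_b because MPHs separate a from b whenever a is not
   below b. Conversely, let phi be an MPM with closed fibres A = phi^-1(1) and B = phi^-1(0).
   Maximality of phi makes A saturated: if f is in A and f(a) <> 1, then h(a) = 0 for some h in A;
   dually for B. Two compactness arguments then give an element a with value 1 on all of A and 0
   on all of B, so phi is contained in e_a and hence equal to it. Finally, g maps P_L into itself,
   being an involution that preserves partial homomorphisms and their extensions, and this gives
   e_(a') = neg e_a. *)

section \<open>Partial homomorphisms into 2\<close>

lemma map_le_Some: "f \<subseteq>\<^sub>m g \<Longrightarrow> f x = Some b \<Longrightarrow> g x = Some b"
  by (metis domI map_le_def)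

lemma partial_hom_iff:
  "partial_hom f \<longleftrightarrow>
     f bot = Some False \<and> f top = Some True \<and>
     (\<forall>x y p q. f x = Some p \<longrightarrow> f y = Some q \<longrightarrow>
        f (inf x y) = Some (p \<and> q) \<and> f (sup x y) = Some (p \<or> q))"
proof
  assume hom: "partial_hom f"
  have "f (inf x y) = Some (p \<and> q) \<and> f (sup x y) = Some (p \<or> q)" if "f x = Some p" "f y = Some q" for x y p q
  proof -
    have "x \<in> dom f" "y \<in> dom f" using that by auto
    then have "inf x y \<in> dom f" "sup x y \<in> dom f"
      "the (f (inf x y)) = (p \<and> q)" "the (f (sup x y)) = (p \<or> q)"
      using hom that by (auto simp: partial_hom_def)
    then show ?thesis by auto
  qed
  then show "f bot = Some False \<and> f top = Some True \<and>
     (\<forall>x y p q. f x = Some p \<longrightarrow> f y = Some q \<longrightarrow>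
        f (inf x y) = Some (p \<and> q) \<and> f (sup x y) = Some (p \<or> q))"
    using hom by (simp add: partial_hom_def)
qed (auto simp: partial_hom_def)

lemma partial_hom_inf: "partial_hom f \<Longrightarrow> f x = Some p \<Longrightarrow> f y = Some q \<Longrightarrow> f (inf x y) = Some (p \<and> q)"
  by (simp add: partial_hom_iff)

lemma partial_hom_sup: "partial_hom f \<Longrightarrow> f x = Some p \<Longrightarrow> f y = Some q \<Longrightarrow> f (sup x y) = Some (p \<or> q)"
  by (simp add: partial_hom_iff)

lemma partial_hom_not_le:
  assumes "partial_hom f" "f x = Some True" "f y = Some False"
  shows "\<not> x \<le> y"
proof
  assume "x \<le> y"
  then have "f x = f (inf x y)" by (simp add: inf_absorb1)
  also have "\<dots> = Some False" using partial_hom_inf[OF assms] by simp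
  finally show False using assms(2) by simp
qed

lemma MPH_partial_hom: "MPH f \<Longrightarrow> partial_hom f"
  by (simp add: MPH_def)

lemma MPH_unique_extension: "MPH f \<Longrightarrow> partial_hom h \<Longrightarrow> f \<subseteq>\<^sub>m h \<Longrightarrow> h = f"
  by (simp add: MPH_def)

lemma MPH_top: "MPH f \<Longrightarrow> f top = Some True"
  by (simp add: MPH_def partial_hom_iff)

lemma MPH_bot: "MPH f \<Longrightarrow> f bot = Some False"
  by (simp add: MPH_def partial_hom_iff)

lemma MPH_inf_true: "MPH f \<Longrightarrow> f x = Some True \<Longrightarrow> f y = Some True \<Longrightarrow> f (inf x y) = Some True"
  using partial_hom_inf[of f x True y True] by (simp add: MPH_def)

lemma MPH_sup_false: "MPH f \<Longrightarrow> f x = Some False \<Longrightarrow> f y = Some False \<Longrightarrow> f (sup x y) = Some False"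
  using partial_hom_sup[of f x False y False] by (simp add: MPH_def)

lemma partial_hom_directed_union:
  assumes "\<exists>h. partial_hom h \<and> h \<subseteq>\<^sub>m u"
    and "\<And>x y. x \<in> dom u \<Longrightarrow> y \<in> dom u \<Longrightarrow> \<exists>h. partial_hom h \<and> h \<subseteq>\<^sub>m u \<and> x \<in> dom h \<and> y \<in> dom h"
  shows "partial_hom u"
  unfolding partial_hom_iff
proof (intro conjI allI impI)
  obtain h0 where "partial_hom h0" "h0 \<subseteq>\<^sub>m u" using assms(1) by blast
  then show "u bot = Some False" "u top = Some True"
    by (auto simp: partial_hom_iff map_le_def dom_def)
  fix x y p q assume xy: "u x = Some p" "u y = Some q"
  then obtain h where h: "partial_hom h" "h \<subseteq>\<^sub>m u" "x \<in> dom h" "y \<in> dom h"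
    using assms(2) by blast
  then have "h x = Some p" "h y = Some q" using xy by (auto simp: map_le_def)
  then show "u (inf x y) = Some (p \<and> q)" "u (sup x y) = Some (p \<or> q)"
    using h(1,2) by (metis domI map_le_def partial_hom_inf, metis domI map_le_def partial_hom_sup)
qed

lemma map_chain_upper_bound:
  fixes C :: "('a \<Rightarrow> 'b option) set"
  assumes "\<And>g h. g \<in> C \<Longrightarrow> h \<in> C \<Longrightarrow> g \<subseteq>\<^sub>m h \<or> h \<subseteq>\<^sub>m g"
  obtains u where "\<And>h. h \<in> C \<Longrightarrow> h \<subseteq>\<^sub>m u" and "\<And>x. x \<in> dom u \<Longrightarrow> \<exists>h\<in>C. x \<in> dom h"
proof
  define u where "u x = (if \<exists>h\<in>C. x \<in> dom h then (SOME h. h \<in> C \<and> x \<in> dom h) x else None)" for x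
  show "x \<in> dom u \<Longrightarrow> \<exists>h\<in>C. x \<in> dom h" for x
    by (auto simp: u_def split: if_splits)
  show "h \<subseteq>\<^sub>m u" if "h \<in> C" for h
    unfolding map_le_def
  proof
    fix x assume x: "x \<in> dom h"
    define h' where "h' = (SOME h. h \<in> C \<and> x \<in> dom h)"
    have h': "h' \<in> C" "x \<in> dom h'" using someI[of "\<lambda>h. h \<in> C \<and> x \<in> dom h"] that x by (auto simp: h'_def)
    then have "h x = h' x" using assms[OF that h'(1)] x by (metis map_le_def)
    then show "h x = u x" using that x by (auto simp: u_def h'_def)
  qed
qed

lemma MPH_exists_above:
  assumes "partial_hom f"
  shows "\<exists>h. MPH h \<and> f \<subseteq>\<^sub>m h"
proof -
  define A where "A = {h. partial_hom h \<and> f \<subseteq>\<^sub>m h}"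
  have "\<exists>m\<in>A. \<forall>h\<in>A. m \<subseteq>\<^sub>m h \<longrightarrow> h = m"
  proof (rule predicate_Zorn)
    show "partial_order_on A (relation_of (\<subseteq>\<^sub>m) A)"
      by (rule partial_order_on_relation_ofI) (auto intro: map_le_trans map_le_antisym)
    fix C assume C: "C \<in> Chains (relation_of (\<subseteq>\<^sub>m) A)"
    then have CA: "C \<subseteq> A" and chain: "\<And>g h. g \<in> C \<Longrightarrow> h \<in> C \<Longrightarrow> g \<subseteq>\<^sub>m h \<or> h \<subseteq>\<^sub>m g"
      by (auto simp: Chains_def relation_of_def)
    show "\<exists>u\<in>A. \<forall>h\<in>C. h \<subseteq>\<^sub>m u"
    proof (cases "C = {}")
      case True
      then show ?thesis using assms by (auto simp: A_def)
    next
      case False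
      obtain u where ub: "\<And>h. h \<in> C \<Longrightarrow> h \<subseteq>\<^sub>m u" and dom_u: "\<And>x. x \<in> dom u \<Longrightarrow> \<exists>h\<in>C. x \<in> dom h"
        using map_chain_upper_bound[OF chain] by blast
      have "partial_hom u"
      proof (rule partial_hom_directed_union)
        show "\<exists>h. partial_hom h \<and> h \<subseteq>\<^sub>m u" using False CA ub by (auto simp: A_def)
        fix x y assume "x \<in> dom u" "y \<in> dom u"
        then obtain g h where "g \<in> C" "h \<in> C" "x \<in> dom g" "y \<in> dom h" using dom_u by blast
        then show "\<exists>h. partial_hom h \<and> h \<subseteq>\<^sub>m u \<and> x \<in> dom h \<and> y \<in> dom h"
          using chain[of g h] CA ub by (auto simp: A_def map_le_def dom_def)
      qed
      moreover have "f \<subseteq>\<^sub>m u" using False CA ub by (auto simp: A_def intro: map_le_trans)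
      ultimately show ?thesis using ub by (auto simp: A_def)
    qed
  qed
  then show ?thesis by (auto simp: A_def MPH_def intro: map_le_trans)
qed

section \<open>Filters, ideals and maximal partial homomorphisms\<close>

definition lattice_filter :: "'a::bounded_lattice set \<Rightarrow> bool" where
  "lattice_filter F \<longleftrightarrow> top \<in> F \<and> (\<forall>x\<in>F. \<forall>y\<in>F. inf x y \<in> F) \<and> (\<forall>x\<in>F. \<forall>y. x \<le> y \<longrightarrow> y \<in> F)"

definition lattice_ideal :: "'a::bounded_lattice set \<Rightarrow> bool" where
  "lattice_ideal I \<longleftrightarrow> bot \<in> I \<and> (\<forall>x\<in>I. \<forall>y\<in>I. sup x y \<in> I) \<and> (\<forall>x\<in>I. \<forall>y. y \<le> x \<longrightarrow> y \<in> I)"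

lemma lattice_filter_upward_closure:
  assumes "top \<in> X" "\<And>x y. x \<in> X \<Longrightarrow> y \<in> X \<Longrightarrow> inf x y \<in> X"
  shows "lattice_filter {y. \<exists>x\<in>X. x \<le> y}"
  unfolding lattice_filter_def using assms by (blast intro: inf_mono order_trans)

lemma lattice_ideal_downward_closure:
  assumes "bot \<in> X" "\<And>x y. x \<in> X \<Longrightarrow> y \<in> X \<Longrightarrow> sup x y \<in> X"
  shows "lattice_ideal {y. \<exists>x\<in>X. y \<le> x}"
  unfolding lattice_ideal_def using assms by (blast intro: sup_mono order_trans)

lemma lattice_filter_finite_lower_bound:
  assumes "lattice_filter F" "finite X" "X \<subseteq> F"
  shows "\<exists>m\<in>F. \<forall>x\<in>X. m \<le> x"
  using assms(2,3)
proof (induction X rule: finite_induct)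
  case empty
  then show ?case using assms(1) by (auto simp: lattice_filter_def)
next
  case (insert x X)
  then obtain m where "m \<in> F" "\<forall>y\<in>X. m \<le> y" by auto
  then show ?case using insert.prems assms(1)
    by (intro bexI[of _ "inf x m"]) (auto simp: lattice_filter_def intro: le_infI2)
qed

lemma lattice_ideal_finite_upper_bound:
  assumes "lattice_ideal I" "finite X" "X \<subseteq> I"
  shows "\<exists>m\<in>I. \<forall>x\<in>X. x \<le> m"
  using assms(2,3)
proof (induction X rule: finite_induct)
  case empty
  then show ?case using assms(1) by (auto simp: lattice_ideal_def)
next
  case (insert x X)
  then obtain m where "m \<in> I" "\<forall>y\<in>X. y \<le> m" by auto
  then show ?case using insert.prems assms(1)
    by (intro bexI[of _ "sup x m"]) (auto simp: lattice_ideal_def intro: le_supI2)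
qed

definition filter_ideal_map :: "'a set \<Rightarrow> 'a set \<Rightarrow> 'a \<Rightarrow> bool option" where
  "filter_ideal_map F I x = (if x \<in> F then Some True else if x \<in> I then Some False else None)"

lemma partial_hom_filter_ideal_map:
  assumes F: "lattice_filter F" and I: "lattice_ideal I" and disj: "F \<inter> I = {}"
  shows "partial_hom (filter_ideal_map F I)"
  unfolding partial_hom_iff
proof (intro conjI allI impI)
  show "filter_ideal_map F I bot = Some False" "filter_ideal_map F I top = Some True"
    using F I disj by (auto simp: filter_ideal_map_def lattice_filter_def lattice_ideal_def)
  fix x y p q
  assume "filter_ideal_map F I x = Some p" "filter_ideal_map F I y = Some q"
  then have x: "x \<in> F \<and> p \<or> x \<in> I \<and> \<not> p" and y: "y \<in> F \<and> q \<or> y \<in> I \<and> \<not> q"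
    by (auto simp: filter_ideal_map_def split: if_splits)
  have "inf x y \<in> F \<and> p \<and> q \<or> inf x y \<in> I \<and> \<not> (p \<and> q)"
    using x y F I by (auto simp: lattice_filter_def lattice_ideal_def)
  moreover have "sup x y \<in> F \<and> (p \<or> q) \<or> sup x y \<in> I \<and> \<not> (p \<or> q)"
    using x y F I by (auto simp: lattice_filter_def lattice_ideal_def)
  ultimately show "filter_ideal_map F I (inf x y) = Some (p \<and> q)"
    "filter_ideal_map F I (sup x y) = Some (p \<or> q)"
    using disj by (auto simp: filter_ideal_map_def)
qed

lemma MPH_separating_filter_ideal:
  assumes "lattice_filter F" "lattice_ideal I" "F \<inter> I = {}"
  obtains f where "MPH f" "F \<subseteq> f -` {Some True}" "I \<subseteq> f -` {Some False}"
proof -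
  obtain f where f: "MPH f" and le: "filter_ideal_map F I \<subseteq>\<^sub>m f"
    using MPH_exists_above[OF partial_hom_filter_ideal_map[OF assms]] by blast
  have "filter_ideal_map F I x = Some True" if "x \<in> F" for x
    using that by (simp add: filter_ideal_map_def)
  moreover have "filter_ideal_map F I x = Some False" if "x \<in> I" for x
    using that assms(3) by (auto simp: filter_ideal_map_def)
  ultimately show thesis using map_le_Some[OF le] by (intro that[OF f]) auto
qed

lemma MPH_filter_ideal:
  assumes "MPH f"
  shows "lattice_filter (f -` {Some True})" "lattice_ideal (f -` {Some False})"
proof -
  have hom: "partial_hom f" using assms by (rule MPH_partial_hom)
  define F where "F = {y. \<exists>x\<in>f -` {Some True}. x \<le> y}"
  define I where "I = {y. \<exists>x\<in>f -` {Some False}. y \<le> x}"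
  have F: "lattice_filter F" unfolding F_def
    using hom partial_hom_inf[OF hom, of _ True _ True]
    by (intro lattice_filter_upward_closure) (auto simp: partial_hom_iff)
  have I: "lattice_ideal I" unfolding I_def
    using hom partial_hom_sup[OF hom, of _ False _ False]
    by (intro lattice_ideal_downward_closure) (auto simp: partial_hom_iff)
  have disj: "F \<inter> I = {}"
    using partial_hom_not_le[OF hom] by (auto simp: F_def I_def dest: order_trans)
  have "f -` {Some True} \<subseteq> F" "f -` {Some False} \<subseteq> I"
    by (auto simp: F_def I_def)
  then have "f \<subseteq>\<^sub>m filter_ideal_map F I"
    using disj unfolding map_le_def filter_ideal_map_def by force
  then have "filter_ideal_map F I = f"
    using MPH_unique_extension[OF assms partial_hom_filter_ideal_map[OF F I disj]] by simp
  then have "f -` {Some True} = F" "f -` {Some False} = I"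
    using disj by (auto simp: filter_ideal_map_def split: if_splits)
  then show "lattice_filter (f -` {Some True})" "lattice_ideal (f -` {Some False})"
    using F I by simp_all
qed

lemma MPH_mono_true: "MPH f \<Longrightarrow> f x = Some True \<Longrightarrow> x \<le> y \<Longrightarrow> f y = Some True"
  using MPH_filter_ideal(1) by (fastforce simp: lattice_filter_def)

lemma MPH_antimono_false: "MPH f \<Longrightarrow> f x = Some False \<Longrightarrow> y \<le> x \<Longrightarrow> f y = Some False"
  using MPH_filter_ideal(2) by (fastforce simp: lattice_ideal_def)

lemma MPH_separates:
  assumes "\<not> a \<le> b"
  obtains f where "MPH f" "f a = Some True" "f b = Some False"
proof (rule MPH_separating_filter_ideal)
  show "lattice_filter {x. a \<le> x}" by (auto simp: lattice_filter_def)
  show "lattice_ideal {x. x \<le> b}" by (auto simp: lattice_ideal_def)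
  show "{x. a \<le> x} \<inter> {x. x \<le> b} = {}" using assms order_trans by blast
qed (use that in auto)

lemma MPH_extend_true:
  assumes "MPH f" "f a \<noteq> Some True"
  obtains g where "MPH g" "f -` {Some True} \<subseteq> g -` {Some True}" "g a = Some False"
proof (rule MPH_separating_filter_ideal)
  show "lattice_filter (f -` {Some True})" using assms(1) by (rule MPH_filter_ideal)
  show "lattice_ideal {x. x \<le> a}" by (auto simp: lattice_ideal_def)
  show "f -` {Some True} \<inter> {x. x \<le> a} = {}" using assms MPH_mono_true by blast
qed (use that in auto)

lemma MPH_extend_false:
  assumes "MPH f" "f a \<noteq> Some False"
  obtains g where "MPH g" "f -` {Some False} \<subseteq> g -` {Some False}" "g a = Some True"
proof (rule MPH_separating_filter_ideal)
  show "lattice_filter {x. a \<le> x}" by (auto simp: lattice_filter_def)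
  show "lattice_ideal (f -` {Some False})" using assms(1) by (rule MPH_filter_ideal)
  show "{x. a \<le> x} \<inter> f -` {Some False} = {}" using assms MPH_antimono_false by blast
qed (use that in auto)

section \<open>Compactness of the dual space\<close>

lemma PL_iff_MPH: "f \<in> PL \<longleftrightarrow> MPH f"
  by (simp add: PL_def)

lemma mem_graph_iff: "(a, b) \<in> Map.graph f \<longleftrightarrow> f a = Some b"
  by (auto intro: in_graphI dest: in_graphD)

definition forced_by :: "('a::bounded_lattice \<times> bool) set \<Rightarrow> bool \<Rightarrow> 'a set" where
  "forced_by S b =
     {y. \<exists>S0. finite S0 \<and> S0 \<subseteq> S \<and> (\<forall>f. MPH f \<longrightarrow> S0 \<subseteq> Map.graph f \<longrightarrow> f y = Some b)}"

lemma forced_byI: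
  "finite S0 \<Longrightarrow> S0 \<subseteq> S \<Longrightarrow> (\<And>f. MPH f \<Longrightarrow> S0 \<subseteq> Map.graph f \<Longrightarrow> f y = Some b) \<Longrightarrow>
    y \<in> forced_by S b"
  unfolding forced_by_def by blast

lemma forced_by_both:
  assumes x: "x \<in> forced_by S b" and y: "y \<in> forced_by S c"
  shows "\<exists>S0. finite S0 \<and> S0 \<subseteq> S \<and>
    (\<forall>f. MPH f \<longrightarrow> S0 \<subseteq> Map.graph f \<longrightarrow> f x = Some b \<and> f y = Some c)"
proof -
  obtain S1 where "finite S1" "S1 \<subseteq> S" "\<forall>f. MPH f \<longrightarrow> S1 \<subseteq> Map.graph f \<longrightarrow> f x = Some b"
    using x unfolding forced_by_def by blast
  moreover obtain S2 where "finite S2" "S2 \<subseteq> S" "\<forall>f. MPH f \<longrightarrow> S2 \<subseteq> Map.graph f \<longrightarrow> f y = Some c"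
    using y unfolding forced_by_def by blast
  ultimately show ?thesis by (intro exI[of _ "S1 \<union> S2"]) auto
qed

lemma lattice_filter_forced_by: "lattice_filter (forced_by S True)"
  unfolding lattice_filter_def
proof (intro conjI ballI allI impI)
  show "top \<in> forced_by S True" by (rule forced_byI[of "{}"]) (auto simp: MPH_top)
  fix x y assume "x \<in> forced_by S True" "y \<in> forced_by S True"
  from forced_by_both[OF this] obtain S0 where "finite S0" "S0 \<subseteq> S"
    "\<forall>f. MPH f \<longrightarrow> S0 \<subseteq> Map.graph f \<longrightarrow> f x = Some True \<and> f y = Some True"
    by blast
  then show "inf x y \<in> forced_by S True" by (intro forced_byI[of S0]) (auto simp: MPH_inf_true)
next
  fix x y assume "x \<in> forced_by S True" and le: "x \<le> y"
  then obtain S0 where S0: "finite S0" "S0 \<subseteq> S"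
    and val: "\<forall>f. MPH f \<longrightarrow> S0 \<subseteq> Map.graph f \<longrightarrow> f x = Some True"
    unfolding forced_by_def by blast
  have "f y = Some True" if "MPH f" "S0 \<subseteq> Map.graph f" for f
    using MPH_mono_true[OF that(1) _ le] val that by blast
  then show "y \<in> forced_by S True" by (rule forced_byI[OF S0])
qed

lemma lattice_ideal_forced_by: "lattice_ideal (forced_by S False)"
  unfolding lattice_ideal_def
proof (intro conjI ballI allI impI)
  show "bot \<in> forced_by S False" by (rule forced_byI[of "{}"]) (auto simp: MPH_bot)
  fix x y assume "x \<in> forced_by S False" "y \<in> forced_by S False"
  from forced_by_both[OF this] obtain S0 where "finite S0" "S0 \<subseteq> S"
    "\<forall>f. MPH f \<longrightarrow> S0 \<subseteq> Map.graph f \<longrightarrow> f x = Some False \<and> f y = Some False"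
    by blast
  then show "sup x y \<in> forced_by S False" by (intro forced_byI[of S0]) (auto simp: MPH_sup_false)
next
  fix x y assume "x \<in> forced_by S False" and le: "y \<le> x"
  then obtain S0 where S0: "finite S0" "S0 \<subseteq> S"
    and val: "\<forall>f. MPH f \<longrightarrow> S0 \<subseteq> Map.graph f \<longrightarrow> f x = Some False"
    unfolding forced_by_def by blast
  have "f y = Some False" if "MPH f" "S0 \<subseteq> Map.graph f" for f
    using MPH_antimono_false[OF that(1) _ le] val that by blast
  then show "y \<in> forced_by S False" by (rule forced_byI[OF S0])
qed

lemma MPH_finitely_satisfiable:
  fixes S :: "('a::bounded_lattice \<times> bool) set"
  assumes fin: "\<And>S0. finite S0 \<Longrightarrow> S0 \<subseteq> S \<Longrightarrow> \<exists>f\<in>PL. S0 \<subseteq> Map.graph f"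
  shows "\<exists>f\<in>PL. S \<subseteq> Map.graph f"
proof -
  have "forced_by S True \<inter> forced_by S False = {}"
  proof (intro equals0I)
    fix y assume "y \<in> forced_by S True \<inter> forced_by S False"
    then obtain S0 where "finite S0" "S0 \<subseteq> S"
      and S0: "\<forall>f. MPH f \<longrightarrow> S0 \<subseteq> Map.graph f \<longrightarrow> f y = Some True \<and> f y = Some False"
      using forced_by_both[of y S True y False] by blast
    then obtain f where "f \<in> PL" "S0 \<subseteq> Map.graph f" using fin[of S0] by blast
    then show False using S0 by (auto simp: PL_iff_MPH)
  qed
  then obtain k where k: "MPH k" "forced_by S True \<subseteq> k -` {Some True}"
    "forced_by S False \<subseteq> k -` {Some False}"
    using MPH_separating_filter_ideal[OF lattice_filter_forced_by lattice_ideal_forced_by] by blast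
  have "k a = Some b" if "(a, b) \<in> S" for a b
  proof -
    have "a \<in> forced_by S b" using that by (intro forced_byI[of "{(a, b)}"]) (auto simp: mem_graph_iff)
    then show ?thesis using k(2,3) by (cases b) auto
  qed
  then have "S \<subseteq> Map.graph k" by (auto simp: mem_graph_iff)
  then show ?thesis using k(1) by (intro bexI[of _ k]) (simp_all add: PL_iff_MPH)
qed

lemma eval_map_vimage: "eval_map a -` {Some b} = {f \<in> PL. f a = Some b}"
  by (auto simp: eval_map_def split: if_splits)

lemma V_set_eq: "V_set a = eval_map a -` {Some False}"
  by (simp add: V_set_def eval_map_vimage)

lemma W_set_eq: "W_set a = eval_map a -` {Some True}"
  by (simp add: W_set_def eval_map_vimage)

definition TL_subbasis :: "('a::bounded_lattice \<Rightarrow> bool option) set set" where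
  "TL_subbasis = range (\<lambda>(a, b). PL - eval_map a -` {Some b})"

lemma TL_generated_by:
  "(TL :: ('a::bounded_lattice \<Rightarrow> bool option) topology) = topology_generated_by (insert PL TL_subbasis)"
proof -
  have "{PL - V_set a |a. True} \<union> {PL - W_set a |a. True} = (TL_subbasis :: ('a \<Rightarrow> bool option) set set)"
  proof (intro equalityI subsetI)
    fix U :: "('a \<Rightarrow> bool option) set"
    assume "U \<in> TL_subbasis"
    then obtain a b where "U = PL - eval_map a -` {Some b}" by (auto simp: TL_subbasis_def)
    then show "U \<in> {PL - V_set a |a. True} \<union> {PL - W_set a |a. True}"
      by (cases b) (auto simp: V_set_eq W_set_eq)
  next
    fix U :: "('a \<Rightarrow> bool option) set"
    assume "U \<in> {PL - V_set a |a. True} \<union> {PL - W_set a |a. True}"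
    then obtain a b where "U = PL - eval_map a -` {Some b}"
      by (auto simp: V_set_eq W_set_eq)
    then show "U \<in> TL_subbasis"
      by (simp add: TL_subbasis_def range_eqI[of _ _ "(a, b)"])
  qed
  then show ?thesis by (simp add: TL_def)
qed

lemma topspace_TL: "topspace TL = PL"
  by (auto simp: TL_generated_by TL_subbasis_def)

lemma openin_TL_subbasis: "U \<in> TL_subbasis \<Longrightarrow> openin TL U"
  unfolding TL_generated_by by (rule topology_generated_by_Basis) simp

lemma closedin_TL_eval_map_vimage: "closedin TL (eval_map a -` {Some b})"
proof -
  have "openin TL (PL - eval_map a -` {Some b})"
    by (rule openin_TL_subbasis) (simp add: TL_subbasis_def range_eqI[of _ _ "(a, b)"])
  then show ?thesis by (auto simp: closedin_def topspace_TL eval_map_vimage)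
qed

lemma TL_subbase:
  "(TL :: ('a::bounded_lattice \<Rightarrow> bool option) topology) =
     topology (arbitrary union_of (finite intersection_of (\<lambda>U. U \<in> TL_subbasis) relative_to PL))"
  (is "TL = ?X")
proof (rule topology_eq[THEN iffD2], intro allI iffI)
  fix U :: "('a \<Rightarrow> bool option) set"
  assume "openin TL U"
  then have gen: "generate_topology_on (insert PL TL_subbasis) U"
    unfolding TL_generated_by by (rule openin_topology_generated_by)
  show "openin ?X U"
  proof (rule generate_topology_on_coarsest[OF istopology_openin _ gen])
    fix V :: "('a \<Rightarrow> bool option) set"
    assume "V \<in> insert PL TL_subbasis"
    then consider "V = PL" | "V \<in> TL_subbasis" by blast
    then show "openin ?X V"
    proof cases
      case 2
      then have "(finite intersection_of (\<lambda>U. U \<in> TL_subbasis) relative_to PL) (PL \<inter> V)"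
        by (intro relative_to_inc finite_intersection_of_inc)
      moreover have "PL \<inter> V = V" using 2 by (auto simp: TL_subbasis_def)
      ultimately show ?thesis by (simp add: openin_subbase arbitrary_union_of_inc)
    qed (metis openin_topspace topspace_subbase)
  qed
next
  fix U :: "('a \<Rightarrow> bool option) set"
  assume "openin ?X U"
  then show "openin TL U"
    using minimal_topology_subbase[of "\<lambda>U. U \<in> TL_subbasis" TL PL U] openin_TL_subbasis
    by (simp add: TL_generated_by topology_generated_by_Basis)
qed

lemma compact_space_TL: "compact_space (TL :: ('a::bounded_lattice \<Rightarrow> bool option) topology)"
proof (rule Alexander_subbase_alt[OF _ _ TL_subbase[symmetric]])
  have "(PL :: ('a \<Rightarrow> bool option) set) = PL - eval_map top -` {Some False}"
    by (auto simp: eval_map_vimage PL_iff_MPH MPH_top)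
  also have "\<dots> \<in> TL_subbasis"
    by (simp add: TL_subbasis_def range_eqI[of _ _ "(top, False)"])
  finally show "(PL :: ('a \<Rightarrow> bool option) set) \<subseteq> \<Union> TL_subbasis" by (rule Union_upper)
next
  fix C :: "('a \<Rightarrow> bool option) set set"
  assume "C \<subseteq> TL_subbasis" and cover: "PL \<subseteq> \<Union>C"
  then obtain S where C: "C = (\<lambda>(a, b). PL - eval_map a -` {Some b}) ` S"
    by (auto simp: TL_subbasis_def subset_image_iff)
  have avoids: "f \<notin> \<Union>((\<lambda>(a, b). PL - eval_map a -` {Some b}) ` S0) \<longleftrightarrow> S0 \<subseteq> Map.graph f"
    if "f \<in> PL" for f :: "'a \<Rightarrow> bool option" and S0
    using that by (auto simp: eval_map_vimage mem_graph_iff)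
  show "\<exists>C'. finite C' \<and> C' \<subseteq> C \<and> PL \<subseteq> \<Union>C'"
  proof (rule ccontr)
    assume no_subcover: "\<nexists>C'. finite C' \<and> C' \<subseteq> C \<and> PL \<subseteq> \<Union>C'"
    have "\<exists>f\<in>PL. S0 \<subseteq> Map.graph f" if "finite S0" "S0 \<subseteq> S" for S0
    proof -
      have "finite ((\<lambda>(a, b). PL - eval_map a -` {Some b}) ` S0)"
        "(\<lambda>(a, b). PL - eval_map a -` {Some b}) ` S0 \<subseteq> C"
        using that unfolding C by auto
      then obtain f where "f \<in> PL" "f \<notin> \<Union>((\<lambda>(a, b). PL - eval_map a -` {Some b}) ` S0)"
        using no_subcover by blast
      then show ?thesis using avoids by blast
    qed
    then obtain f where f: "f \<in> PL" "S \<subseteq> Map.graph f"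
      using MPH_finitely_satisfiable[of S] by blast
    then have "f \<notin> \<Union>C" using avoids[OF f(1), of S] unfolding C by blast
    then show False using cover f(1) by blast
  qed
qed

lemma closedin_TL_finite_intersection:
  fixes C :: "('a::bounded_lattice \<Rightarrow> bool option) set"
  assumes C: "closedin TL C" and fin: "\<And>X0. finite X0 \<Longrightarrow> X0 \<subseteq> X \<Longrightarrow> \<exists>f\<in>C. \<forall>x\<in>X0. f x = Some b"
  shows "\<exists>f\<in>C. \<forall>x\<in>X. f x = Some b"
proof -
  have CPL: "C \<subseteq> PL" using closedin_subset[OF C] by (simp add: topspace_TL)
  have "compactin TL C" using closedin_compact_space[OF compact_space_TL C] .
  then have fip: "\<forall>\<U>. (\<forall>U\<in>\<U>. closedin TL U) \<and> (\<forall>\<F>. finite \<F> \<and> \<F> \<subseteq> \<U> \<longrightarrow> C \<inter> \<Inter>\<F> \<noteq> {})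
      \<longrightarrow> C \<inter> \<Inter>\<U> \<noteq> {}"
    unfolding compactin_fip by (rule conjunct2)
  have mem_Inter: "f \<in> C \<inter> \<Inter>((\<lambda>x. eval_map x -` {Some b}) ` X0) \<longleftrightarrow> f \<in> C \<and> (\<forall>x\<in>X0. f x = Some b)"
    for f :: "'a \<Rightarrow> bool option" and X0
    using CPL by (auto simp: eval_map_vimage)
  have "C \<inter> \<Inter>((\<lambda>x. eval_map x -` {Some b}) ` X) \<noteq> {}"
  proof (rule fip[rule_format, OF conjI])
    show "\<forall>U\<in>(\<lambda>x. eval_map x -` {Some b}) ` X. closedin TL U"
      by (auto simp: closedin_TL_eval_map_vimage)
    show "\<forall>\<F>. finite \<F> \<and> \<F> \<subseteq> (\<lambda>x. eval_map x -` {Some b}) ` X \<longrightarrow> C \<inter> \<Inter>\<F> \<noteq> {}"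
    proof (intro allI impI, elim conjE)
      fix \<F> assume "finite \<F>" "\<F> \<subseteq> (\<lambda>x. eval_map x -` {Some b}) ` X"
      then obtain X0 where X0: "finite X0" "X0 \<subseteq> X" "\<F> = (\<lambda>x. eval_map x -` {Some b}) ` X0"
        by (auto dest: finite_subset_image)
      then obtain f where "f \<in> C" "\<forall>x\<in>X0. f x = Some b" using fin by blast
      then have "f \<in> C \<inter> \<Inter>\<F>" using mem_Inter[of f X0] X0(3) by simp
      then show "C \<inter> \<Inter>\<F> \<noteq> {}" by blast
    qed
  qed
  then obtain f where "f \<in> C \<inter> \<Inter>((\<lambda>x. eval_map x -` {Some b}) ` X)" by blast
  then show ?thesis using mem_Inter[of f X] by blast
qed

lemma closedin_TL_filter:
  assumes C: "closedin TL C" and F: "lattice_filter F" and hit: "\<And>c. c \<in> F \<Longrightarrow> \<exists>f\<in>C. f c = Some True"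
  shows "\<exists>f\<in>C. \<forall>c\<in>F. f c = Some True"
proof (rule closedin_TL_finite_intersection[OF C])
  fix X0 assume "finite X0" "X0 \<subseteq> F"
  then obtain m where "m \<in> F" and m: "\<forall>x\<in>X0. m \<le> x"
    using lattice_filter_finite_lower_bound[OF F] by blast
  then obtain f where f: "f \<in> C" "f m = Some True" using hit by blast
  then have "MPH f" using closedin_subset[OF C] by (auto simp: topspace_TL PL_iff_MPH)
  then show "\<exists>f\<in>C. \<forall>x\<in>X0. f x = Some True" using f m MPH_mono_true by blast
qed

lemma closedin_TL_ideal:
  assumes C: "closedin TL C" and I: "lattice_ideal I" and hit: "\<And>c. c \<in> I \<Longrightarrow> \<exists>f\<in>C. f c = Some False"
  shows "\<exists>f\<in>C. \<forall>c\<in>I. f c = Some False"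
proof (rule closedin_TL_finite_intersection[OF C])
  fix X0 assume "finite X0" "X0 \<subseteq> I"
  then obtain m where "m \<in> I" and m: "\<forall>x\<in>X0. x \<le> m"
    using lattice_ideal_finite_upper_bound[OF I] by blast
  then obtain f where f: "f \<in> C" "f m = Some False" using hit by blast
  then have "MPH f" using closedin_subset[OF C] by (auto simp: topspace_TL PL_iff_MPH)
  then show "\<exists>f\<in>C. \<forall>x\<in>X0. f x = Some False" using f m MPH_antimono_false by blast
qed

lemma closedin_TL_singleton:
  fixes g :: "'a::bounded_lattice \<Rightarrow> bool option"
  assumes g: "g \<in> PL"
  shows "closedin TL {g}"
proof -
  have "PL - {g} = (\<Union>(a, b)\<in>Map.graph g. PL - eval_map a -` {Some b})"
  proof (intro equalityI subsetI)
    fix h assume h: "h \<in> PL - {g}"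
    have "\<not> g \<subseteq>\<^sub>m h"
    proof
      assume "g \<subseteq>\<^sub>m h"
      then have "h = g" using MPH_unique_extension[of g h] g h by (simp add: PL_iff_MPH MPH_partial_hom)
      then show False using h by simp
    qed
    then obtain a b where "g a = Some b" "h a \<noteq> Some b" by (auto simp: map_le_def)
    then show "h \<in> (\<Union>(a, b)\<in>Map.graph g. PL - eval_map a -` {Some b})"
      using h by (intro UN_I[of "(a, b)"]) (auto simp: eval_map_vimage mem_graph_iff)
  qed (auto simp: eval_map_vimage mem_graph_iff)
  moreover have "openin TL (PL - eval_map a -` {Some b})" for a :: 'a and b
    by (rule openin_TL_subbasis) (simp add: TL_subbasis_def range_eqI[of _ _ "(a, b)"])
  ultimately have "openin TL (PL - {g})" by auto
  then show ?thesis using g by (simp add: closedin_def topspace_TL)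
qed

section \<open>Partial morphisms and the evaluation maps\<close>

lemma EL_iff: "EL f h \<longleftrightarrow> (\<forall>c. f c = Some True \<longrightarrow> h c \<noteq> Some False)"
  unfolding EL_def
proof (intro iffI allI impI ballI notI)
  fix c assume H: "\<forall>a\<in>dom f \<inter> dom h. the (f a) \<le> the (h a)" "f c = Some True" "h c = Some False"
  then have "c \<in> dom f \<inter> dom h" by auto
  then have "the (f c) \<le> the (h c)" using H(1) by blast
  then show False using H(2,3) by simp
next
  fix a assume H: "\<forall>c. f c = Some True \<longrightarrow> h c \<noteq> Some False" "a \<in> dom f \<inter> dom h"
  then obtain p q where "f a = Some p" "h a = Some q" by auto
  then show "the (f a) \<le> the (h a)" using H(1) by (cases p; cases q) auto
qed

lemma bool_partial_map_mono_iff: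
  fixes \<psi> :: "'x \<Rightarrow> bool option"
  shows "(\<forall>x\<in>dom \<psi>. \<forall>y\<in>dom \<psi>. R x y \<longrightarrow> the (\<psi> x) \<le> the (\<psi> y)) \<longleftrightarrow>
    (\<forall>x y. \<psi> x = Some True \<longrightarrow> \<psi> y = Some False \<longrightarrow> \<not> R x y)"
proof (intro iffI allI impI ballI notI)
  fix x y assume H: "\<forall>x\<in>dom \<psi>. \<forall>y\<in>dom \<psi>. R x y \<longrightarrow> the (\<psi> x) \<le> the (\<psi> y)"
    and xy: "\<psi> x = Some True" "\<psi> y = Some False" "R x y"
  then have "x \<in> dom \<psi>" "y \<in> dom \<psi>" by auto
  then show False using H xy by fastforce
next
  fix x y assume H: "\<forall>x y. \<psi> x = Some True \<longrightarrow> \<psi> y = Some False \<longrightarrow> \<not> R x y"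
    and "x \<in> dom \<psi>" "y \<in> dom \<psi>" "R x y"
  then obtain p q where "\<psi> x = Some p" "\<psi> y = Some q" by auto
  then show "the (\<psi> x) \<le> the (\<psi> y)" using H \<open>R x y\<close> by (cases p; cases q) auto
qed

lemma closedin_continuous_partial_map_iff:
  fixes \<psi> :: "'x \<Rightarrow> bool option"
  assumes "dom \<psi> \<subseteq> topspace X"
  shows "closedin X (dom \<psi>) \<and>
      continuous_map (subtopology X (dom \<psi>)) (discrete_topology UNIV) (\<lambda>x. the (\<psi> x)) \<longleftrightarrow>
    (\<forall>b. closedin X (\<psi> -` {Some b}))"
proof -
  have fibres: "{x \<in> topspace (subtopology X (dom \<psi>)). the (\<psi> x) \<in> B} = (\<Union>b\<in>B. \<psi> -` {Some b})" for B
    using assms by auto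
  show ?thesis
  proof (intro iffI allI conjI; (elim conjE)?)
    fix b
    assume "closedin X (dom \<psi>)"
      and "continuous_map (subtopology X (dom \<psi>)) (discrete_topology UNIV) (\<lambda>x. the (\<psi> x))"
    then have "\<forall>B. closedin (subtopology X (dom \<psi>)) (\<Union>b\<in>B. \<psi> -` {Some b})"
      unfolding continuous_map_closedin fibres by simp
    from this[rule_format, of "{b}"] have "closedin (subtopology X (dom \<psi>)) (\<psi> -` {Some b})"
      by simp
    then show "closedin X (\<psi> -` {Some b})"
      using \<open>closedin X (dom \<psi>)\<close> closedin_trans_full by auto
  next
    assume closed: "\<forall>b. closedin X (\<psi> -` {Some b})"
    have "dom \<psi> = \<psi> -` {Some True} \<union> \<psi> -` {Some False}"
      by (auto simp: dom_def)
    then show "closedin X (dom \<psi>)" using closed by auto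
    show "continuous_map (subtopology X (dom \<psi>)) (discrete_topology UNIV) (\<lambda>x. the (\<psi> x))"
      unfolding continuous_map_closedin fibres
    proof (intro conjI allI impI)
      fix B :: "bool set"
      have "closedin X (\<Union>b\<in>B. \<psi> -` {Some b})" using closed by (intro closedin_Union) auto
      moreover have "(\<Union>b\<in>B. \<psi> -` {Some b}) \<subseteq> dom \<psi>" by auto
      ultimately show "closedin (subtopology X (dom \<psi>)) (\<Union>b\<in>B. \<psi> -` {Some b})"
        by (rule closedin_subset_topspace)
    qed auto
  qed
qed

lemma partial_morphism_iff:
  "partial_morphism \<psi> \<longleftrightarrow>
     dom \<psi> \<subseteq> PL \<and> (\<forall>b. closedin TL (\<psi> -` {Some b})) \<and>
     (\<forall>x y. \<psi> x = Some True \<longrightarrow> \<psi> y = Some False \<longrightarrow> \<not> EL x y)"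
proof (cases "dom \<psi> \<subseteq> PL")
  case True
  then show ?thesis
    using closedin_continuous_partial_map_iff[of \<psi> TL]
    unfolding partial_morphism_def bool_partial_map_mono_iff by (auto simp: topspace_TL)
qed (simp add: partial_morphism_def)

lemma partial_morphism_eval_map: "partial_morphism (eval_map a)"
  unfolding partial_morphism_iff
proof (intro conjI allI impI notI)
  show "dom (eval_map a) \<subseteq> PL" by (auto simp: eval_map_def split: if_splits)
  show "closedin TL (eval_map a -` {Some b})" for b by (rule closedin_TL_eval_map_vimage)
  fix x y assume "eval_map a x = Some True" "eval_map a y = Some False" "EL x y"
  then show False by (auto simp: eval_map_def EL_iff split: if_splits)
qed

lemma eval_map_MPM: "eval_map a \<in> MPM"
  unfolding MPM_def
proof (intro CollectI conjI allI impI partial_morphism_eval_map)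
  fix \<psi> assume "partial_morphism \<psi> \<and> eval_map a \<subseteq>\<^sub>m \<psi>"
  then have pm: "partial_morphism \<psi>" and le: "eval_map a \<subseteq>\<^sub>m \<psi>" by auto
  have "\<psi> f = eval_map a f" for f
  proof (cases "eval_map a f")
    case (Some b)
    then show ?thesis using map_le_Some[OF le] by simp
  next
    case None
    show ?thesis
    proof (cases "\<psi> f")
      case (Some b)
      then have "f \<in> PL" using pm by (auto simp: partial_morphism_iff)
      then have f: "MPH f" "f a = None" using None by (simp_all add: PL_iff_MPH eval_map_def)
      show ?thesis
      proof (cases b)
        case True
        have "f a \<noteq> Some True" using f(2) by simp
        then obtain g where "MPH g" "f -` {Some True} \<subseteq> g -` {Some True}" "g a = Some False"
          by (rule MPH_extend_true[OF f(1)])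
        then have "\<psi> g = Some False" "EL f g"
          using map_le_Some[OF le] by (auto simp: eval_map_def PL_iff_MPH EL_iff)
        then show ?thesis using pm Some True by (auto simp: partial_morphism_iff)
      next
        case False
        have "f a \<noteq> Some False" using f(2) by simp
        then obtain g where "MPH g" "f -` {Some False} \<subseteq> g -` {Some False}" "g a = Some True"
          by (rule MPH_extend_false[OF f(1)])
        then have "\<psi> g = Some True" "EL g f"
          using map_le_Some[OF le] by (auto simp: eval_map_def PL_iff_MPH EL_iff)
        then show ?thesis using pm Some False by (auto simp: partial_morphism_iff)
      qed
    qed (simp add: None)
  qed
  then show "\<psi> = eval_map a" by blast
qed

lemma eval_map_le_iff: "a \<le> b \<longleftrightarrow> mpm_le (eval_map a) (eval_map b)"
proof
  assume "a \<le> b"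
  then show "mpm_le (eval_map a) (eval_map b)"
    by (auto simp: mpm_le_def eval_map_def PL_iff_MPH intro: MPH_mono_true split: if_splits)
next
  assume le: "mpm_le (eval_map a) (eval_map b)"
  show "a \<le> b"
  proof (rule ccontr)
    assume "\<not> a \<le> b"
    then obtain f where "MPH f" "f a = Some True" "f b = Some False" by (rule MPH_separates)
    then have "eval_map a f = Some True" "eval_map b f = Some False"
      by (simp_all add: eval_map_def PL_iff_MPH)
    then show False using le by (auto simp: mpm_le_def)
  qed
qed

section \<open>Every maximal partial morphism is an evaluation map\<close>

lemma MPM_partial_morphism: "\<phi> \<in> MPM \<Longrightarrow> partial_morphism \<phi>"
  by (simp add: MPM_def)

lemma MPM_unique_extension: "\<phi> \<in> MPM \<Longrightarrow> partial_morphism \<psi> \<Longrightarrow> \<phi> \<subseteq>\<^sub>m \<psi> \<Longrightarrow> \<psi> = \<phi>"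
  by (simp add: MPM_def)

lemma MPM_not_true_and_false:
  "\<phi> \<in> MPM \<Longrightarrow> \<phi> f = Some True \<Longrightarrow> \<phi> h = Some False \<Longrightarrow> \<not> EL f h"
  using MPM_partial_morphism[of \<phi>] by (simp add: partial_morphism_iff)

lemma MPM_in_PL:
  assumes "\<phi> \<in> MPM" "\<phi> f = Some b"
  shows "f \<in> PL"
proof -
  have "dom \<phi> \<subseteq> PL" using MPM_partial_morphism[OF assms(1)] by (simp add: partial_morphism_iff)
  then show ?thesis using assms(2) by auto
qed

lemma MPM_closedin_vimage: "\<phi> \<in> MPM \<Longrightarrow> closedin TL (\<phi> -` {Some b})"
  using MPM_partial_morphism[of \<phi>] by (simp add: partial_morphism_iff)

lemma partial_morphism_fun_upd:
  assumes \<phi>: "partial_morphism \<phi>" and g: "g \<in> PL" "\<phi> g = None"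
    and above: "\<And>y. \<phi> y = Some False \<Longrightarrow> EL g y \<Longrightarrow> \<not> b"
    and below: "\<And>x. \<phi> x = Some True \<Longrightarrow> EL x g \<Longrightarrow> b"
  shows "partial_morphism (\<phi>(g \<mapsto> b))"
  unfolding partial_morphism_iff
proof (intro conjI allI impI notI)
  show "dom (\<phi>(g \<mapsto> b)) \<subseteq> PL" using \<phi> g by (auto simp: partial_morphism_iff)
  fix c
  have closed: "closedin TL (\<phi> -` {Some c})" using \<phi> by (simp add: partial_morphism_iff)
  show "closedin TL ((\<phi>(g \<mapsto> b)) -` {Some c})"
  proof (cases "b = c")
    case True
    then have "(\<phi>(g \<mapsto> b)) -` {Some c} = {g} \<union> \<phi> -` {Some c}" using g(2) by auto
    then show ?thesis by (simp only:) (rule closedin_Un[OF closedin_TL_singleton[OF g(1)] closed])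
  next
    case False
    then have "(\<phi>(g \<mapsto> b)) -` {Some c} = \<phi> -` {Some c}" using g(2) by (auto split: if_splits)
    then show ?thesis using closed by simp
  qed
next
  fix x y assume xy: "(\<phi>(g \<mapsto> b)) x = Some True" "(\<phi>(g \<mapsto> b)) y = Some False" "EL x y"
  consider "x = g" "y \<noteq> g" | "x \<noteq> g" "y = g" | "x \<noteq> g" "y \<noteq> g"
    using xy(1,2) by fastforce
  then show False
  proof cases
    case 1
    then show False using xy above by auto
  next
    case 2
    then show False using xy below by auto
  next
    case 3
    then show False using xy \<phi> by (auto simp: partial_morphism_iff)
  qed
qed

lemma MPM_no_point_extension:
  assumes "\<phi> \<in> MPM" "\<phi> g = None"
  shows "\<not> partial_morphism (\<phi>(g \<mapsto> b))"
proof
  assume "partial_morphism (\<phi>(g \<mapsto> b))"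
  moreover have "\<phi> \<subseteq>\<^sub>m \<phi>(g \<mapsto> b)" using assms(2) by (auto simp: map_le_def)
  ultimately have "\<phi>(g \<mapsto> b) = \<phi>" using MPM_unique_extension[OF assms(1)] by blast
  then show False using assms(2) by (metis fun_upd_same option.distinct(1))
qed

lemma MPM_true_saturated:
  assumes \<phi>: "\<phi> \<in> MPM" and f: "\<phi> f = Some True" and "f a \<noteq> Some True"
  obtains g where "\<phi> g = Some True" "g a = Some False"
proof -
  have "MPH f" using MPM_in_PL[OF \<phi> f] by (simp add: PL_iff_MPH)
  then obtain g where g: "MPH g" "f -` {Some True} \<subseteq> g -` {Some True}" "g a = Some False"
    using MPH_extend_true assms(3) by blast
  have "EL f y" if "EL g y" for y using g(2) that by (auto simp: EL_iff)
  then have up: "\<not> (\<phi> y = Some False \<and> EL g y)" for y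
    using MPM_not_true_and_false[OF \<phi> f] by blast
  have "\<phi> g = Some True"
  proof (cases "\<phi> g")
    case None
    \<comment> \<open>then \<open>g\<close> could be added to the true fibre of \<open>\<phi>\<close>, contradicting maximality\<close>
    have "partial_morphism (\<phi>(g \<mapsto> True))"
      using MPM_partial_morphism[OF \<phi>] g(1) None up
      by (intro partial_morphism_fun_upd) (auto simp: PL_iff_MPH)
    then show ?thesis using MPM_no_point_extension[OF \<phi> None] by blast
  next
    case (Some c)
    then show ?thesis using up[of g] by (cases c) (auto simp: EL_def)
  qed
  then show thesis using g(3) that by blast
qed

lemma MPM_false_saturated:
  assumes \<phi>: "\<phi> \<in> MPM" and h: "\<phi> h = Some False" and "h a \<noteq> Some False"
  obtains g where "\<phi> g = Some False" "g a = Some True"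
proof -
  have "MPH h" using MPM_in_PL[OF \<phi> h] by (simp add: PL_iff_MPH)
  then obtain g where g: "MPH g" "h -` {Some False} \<subseteq> g -` {Some False}" "g a = Some True"
    using MPH_extend_false assms(3) by blast
  have "EL x h" if "EL x g" for x using g(2) that by (auto simp: EL_iff)
  then have down: "\<not> (\<phi> x = Some True \<and> EL x g)" for x
    using MPM_not_true_and_false[OF \<phi> _ h] by blast
  have "\<phi> g = Some False"
  proof (cases "\<phi> g")
    case None
    have "partial_morphism (\<phi>(g \<mapsto> False))"
      using MPM_partial_morphism[OF \<phi>] g(1) None down
      by (intro partial_morphism_fun_upd) (auto simp: PL_iff_MPH)
    then show ?thesis using MPM_no_point_extension[OF \<phi> None] by blast
  next
    case (Some c)
    then show ?thesis using down[of g] by (cases c) (auto simp: EL_def)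
  qed
  then show thesis using g(3) that by blast
qed

lemma MPM_false_point_separated:
  assumes \<phi>: "\<phi> \<in> MPM" and h: "\<phi> h = Some False"
  obtains c where "h c = Some False" "\<And>f. \<phi> f = Some True \<Longrightarrow> f c = Some True"
proof -
  have "\<exists>c. h c = Some False \<and> (\<forall>f. \<phi> f = Some True \<longrightarrow> f c \<noteq> Some False)"
  proof (rule ccontr)
    assume none: "\<nexists>c. h c = Some False \<and> (\<forall>f. \<phi> f = Some True \<longrightarrow> f c \<noteq> Some False)"
    have hit: "\<exists>f\<in>\<phi> -` {Some True}. f c = Some False" if c: "c \<in> h -` {Some False}" for c
    proof -
      obtain f where "\<phi> f = Some True" "f c = Some False" using none c by auto
      then show ?thesis by (intro bexI[of _ f]) simp_all
    qed
    have ideal: "lattice_ideal (h -` {Some False})"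
      using MPM_in_PL[OF \<phi> h] by (simp add: PL_iff_MPH MPH_filter_ideal)
    obtain k where k: "\<phi> k = Some True" "\<forall>c\<in>h -` {Some False}. k c = Some False"
      using closedin_TL_ideal[OF MPM_closedin_vimage[OF \<phi>] ideal hit] by auto
    then have "\<not> EL k h" using MPM_not_true_and_false[OF \<phi> _ h] by blast
    then obtain c where "k c = Some True" "h c = Some False" by (auto simp: EL_iff)
    then show False using k(2) by auto
  qed
  then obtain c where c: "h c = Some False" "\<And>f. \<phi> f = Some True \<Longrightarrow> f c \<noteq> Some False" by blast
  have "f c = Some True" if f: "\<phi> f = Some True" for f
  proof (rule ccontr)
    assume "f c \<noteq> Some True"
    then obtain g where "\<phi> g = Some True" "g c = Some False"
      using MPM_true_saturated[OF \<phi> f] by blast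
    then show False using c(2) by blast
  qed
  then show thesis using that c(1) by blast
qed

lemma MPM_separating_element:
  assumes \<phi>: "\<phi> \<in> MPM"
  obtains a where "\<And>f. \<phi> f = Some True \<Longrightarrow> f a = Some True"
    "\<And>h. \<phi> h = Some False \<Longrightarrow> h a = Some False"
proof -
  define F where "F = {c. \<forall>f. \<phi> f = Some True \<longrightarrow> f c = Some True}"
  have MPH_true: "MPH f" if "\<phi> f = Some True" for f
    using MPM_in_PL[OF \<phi> that] by (simp add: PL_iff_MPH)
  have F: "lattice_filter F"
    unfolding lattice_filter_def F_def
    by (auto intro: MPH_top MPH_inf_true MPH_mono_true MPH_true)
  have "\<exists>a\<in>F. \<forall>h. \<phi> h = Some False \<longrightarrow> h a \<noteq> Some True"
  proof (rule ccontr)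
    assume none: "\<not> (\<exists>a\<in>F. \<forall>h. \<phi> h = Some False \<longrightarrow> h a \<noteq> Some True)"
    have hit: "\<exists>h\<in>\<phi> -` {Some False}. h c = Some True" if c: "c \<in> F" for c
    proof -
      obtain h where "\<phi> h = Some False" "h c = Some True" using none c by auto
      then show ?thesis by (intro bexI[of _ h]) simp_all
    qed
    obtain h where h: "\<phi> h = Some False" "\<forall>c\<in>F. h c = Some True"
      using closedin_TL_filter[OF MPM_closedin_vimage[OF \<phi>] F hit] by auto
    obtain c where "h c = Some False" "c \<in> F"
      using MPM_false_point_separated[OF \<phi> h(1)] unfolding F_def by blast
    then show False using h(2) by auto
  qed
  then obtain a where a: "a \<in> F" "\<And>h. \<phi> h = Some False \<Longrightarrow> h a \<noteq> Some True" by blast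
  have "h a = Some False" if h: "\<phi> h = Some False" for h
  proof (rule ccontr)
    assume "h a \<noteq> Some False"
    then obtain g where "\<phi> g = Some False" "g a = Some True"
      using MPM_false_saturated[OF \<phi> h] by blast
    then show False using a(2) by blast
  qed
  then show thesis using that a(1) by (auto simp: F_def)
qed

lemma MPM_eq_eval_map:
  assumes \<phi>: "\<phi> \<in> MPM"
  obtains a where "\<phi> = eval_map a"
proof -
  obtain a where true: "\<And>f. \<phi> f = Some True \<Longrightarrow> f a = Some True"
    and false: "\<And>h. \<phi> h = Some False \<Longrightarrow> h a = Some False"
    using MPM_separating_element[OF \<phi>] by blast
  have "\<phi> \<subseteq>\<^sub>m eval_map a"
    unfolding map_le_def
  proof
    fix f assume "f \<in> dom \<phi>"
    then obtain b where b: "\<phi> f = Some b" by auto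
    then have "f \<in> PL" by (rule MPM_in_PL[OF \<phi>])
    moreover have "f a = Some b" using b true false by (cases b) auto
    ultimately show "\<phi> f = eval_map a f" using b by (simp add: eval_map_def)
  qed
  then have "eval_map a = \<phi>" by (rule MPM_unique_extension[OF \<phi> partial_morphism_eval_map])
  then show thesis using that by blast
qed

lemma range_eval_map: "range eval_map = MPM" (is "?R = ?M")
proof
  show "?R \<subseteq> ?M" using eval_map_MPM by blast
  show "?M \<subseteq> ?R"
  proof
    fix \<phi> assume "\<phi> \<in> ?M"
    then obtain a where "\<phi> = eval_map a" by (rule MPM_eq_eval_map)
    then show "\<phi> \<in> ?R" by simp
  qed
qed

lemma inj_eval_map: "inj eval_map"
proof (rule injI)
  fix a b :: 'a assume "eval_map a = eval_map b"
  then have "a \<le> b" "b \<le> a" by (simp_all add: eval_map_le_iff mpm_le_def)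
  then show "a = b" by (rule antisym)
qed

section \<open>Negation\<close>

lemma gL_eq: "gL f a = map_option Not (f (- a))"
  by (cases "f (- a)") (auto simp: gL_def)

lemma gL_gL: "gL (gL f) = f"
  by (rule ext) (simp add: gL_eq option.map_comp comp_def option.map_ident)

lemma partial_hom_gL:
  assumes "partial_hom f"
  shows "partial_hom (gL f)"
  unfolding partial_hom_iff
proof (intro conjI allI impI)
  show "gL f bot = Some False" "gL f top = Some True"
    using assms by (simp_all add: partial_hom_iff gL_eq)
  fix x y p q assume "gL f x = Some p" "gL f y = Some q"
  then have "f (- x) = Some (\<not> p)" "f (- y) = Some (\<not> q)" by (auto simp: gL_eq)
  then show "gL f (inf x y) = Some (p \<and> q)" "gL f (sup x y) = Some (p \<or> q)"
    using partial_hom_inf[OF assms] partial_hom_sup[OF assms] by (simp_all add: gL_eq)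
qed

lemma map_le_gL: "f \<subseteq>\<^sub>m h \<Longrightarrow> gL f \<subseteq>\<^sub>m gL h"
  unfolding map_le_def
proof
  fix a assume le: "\<forall>a\<in>dom f. f a = h a" and "a \<in> dom (gL f)"
  then have "- a \<in> dom f" by (auto simp: gL_eq)
  then show "gL f a = gL h a" using le by (simp add: gL_eq)
qed

lemma MPH_gL:
  assumes "MPH f"
  shows "MPH (gL f)"
  unfolding MPH_def
proof (intro conjI allI impI)
  show "partial_hom (gL f)" using assms by (intro partial_hom_gL MPH_partial_hom)
  fix h assume "partial_hom h \<and> gL f \<subseteq>\<^sub>m h"
  then have "gL h = f"
    using MPH_unique_extension[OF assms partial_hom_gL] map_le_gL[of "gL f" h] by (simp add: gL_gL)
  then show "h = gL f" by (metis gL_gL)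
qed

lemma eval_map_uminus: "eval_map (- a) = mpm_neg (eval_map a)"
proof
  fix f
  show "eval_map (- a) f = mpm_neg (eval_map a) f"
  proof (cases "f \<in> PL")
    case True
    then have "gL f \<in> PL" by (simp add: PL_iff_MPH MPH_gL)
    then show ?thesis using True by (cases "f (- a)") (auto simp: eval_map_def mpm_neg_def gL_eq)
  qed (simp add: eval_map_def mpm_neg_def)
qed

theorem theorem5p3:
  shows "bij_betw (eval_map :: 'a::orthocomplemented_lattice \<Rightarrow> _) UNIV MPM
    \<and> (\<forall>a b::'a. a \<le> b \<longleftrightarrow> mpm_le (eval_map a) (eval_map b))
    \<and> (\<forall>a b::'a.
          mpm_le (eval_map (inf a b)) (eval_map a) \<and> mpm_le (eval_map (inf a b)) (eval_map b) \<and>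
          (\<forall>\<theta>\<in>MPM. mpm_le \<theta> (eval_map a) \<and> mpm_le \<theta> (eval_map b)
                      \<longrightarrow> mpm_le \<theta> (eval_map (inf a b))))
    \<and> (\<forall>a b::'a.
          mpm_le (eval_map a) (eval_map (sup a b)) \<and> mpm_le (eval_map b) (eval_map (sup a b)) \<and>
          (\<forall>\<theta>\<in>MPM. mpm_le (eval_map a) \<theta> \<and> mpm_le (eval_map b) \<theta>
                      \<longrightarrow> mpm_le (eval_map (sup a b)) \<theta>))
    \<and> (\<forall>\<theta>\<in>MPM. mpm_le (eval_map (bot::'a)) \<theta> \<and> mpm_le \<theta> (eval_map (top::'a)))
    \<and> (\<forall>a::'a. eval_map (- a) = mpm_neg (eval_map a))"
proof -
  have bij: "bij_betw (eval_map :: 'a \<Rightarrow> _) UNIV MPM"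
    using inj_eval_map range_eval_map by (simp add: bij_betw_def)
  have ball_MPM: "(\<forall>\<theta>\<in>MPM. P \<theta>) \<longleftrightarrow> (\<forall>c::'a. P (eval_map c))" for P
    by (simp flip: range_eval_map)
  show ?thesis
    using bij by (simp add: ball_MPM eval_map_le_iff[symmetric] eval_map_uminus)
qed

end
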